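(* There exists a full amicable orthogonal design $AOD\big(72;\ 18,54;\ 72\big)$.
   Context: An orthogonal design $OD(m;c_1,\ldots,c_k)$ is an $m\times m$ matrix $X$ with entries from $\{0,\pm x_1,\ldots,\pm x_k\}$, where $x_1,\ldots,x_k$ are commuting indeterminates, such that $XX^{\rm T}=(\sum_j c_jx_j^2)I_m$. An amicable orthogonal design $AOD(m;c_1,\ldots,c_k;d_1,\ldots,d_\ell)$ is a pair $(X;Y)$ where $X$ is an $OD(m;c_1,\ldots,c_k)$ in indeterminates $x_1,\ldots,x_k$, $Y$ is an $OD(m;d_1,\ldots,d_\ell)$ in indeterminates $y_1,\ldots,y_\ell$ disjoint from the $x_i$, and $XY^{\rm T}=YX^{\rm T}$. It is full if neither $X$ nor $Y$ has a zero entry. *)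

theory Defs
  imports Main Complex_Main
begin

text \<open>A design matrix of order m in k indeterminates: entry (i,j) is a pair (s, t)
  with s in {-1,0,1} and t < k, standing for the entry s * x_t (0 if s = 0).\<close>
type_synonym design = "nat \<Rightarrow> nat \<Rightarrow> int \<times> nat"

definition entry_ok :: "nat \<Rightarrow> int \<times> nat \<Rightarrow> bool" where
  "entry_ok k e \<longleftrightarrow> fst e \<in> {-1, 0, 1} \<and> snd e < k"

definition deval :: "design \<Rightarrow> (nat \<Rightarrow> real) \<Rightarrow> nat \<Rightarrow> nat \<Rightarrow> real" where
  "deval D x i j = of_int (fst (D i j)) * x (snd (D i j))"

text \<open>The polynomial identity
  X X^T = (sum c_j x_j^2) I is expressed as an identity for all real values of the
  indeterminates (equivalent, since R is infinite).\<close>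
definition is_OD :: "nat \<Rightarrow> nat list \<Rightarrow> design \<Rightarrow> bool" where
  "is_OD m c D \<longleftrightarrow>
     (\<forall>i<m. \<forall>j<m. entry_ok (length c) (D i j)) \<and>
     (\<forall>x::nat \<Rightarrow> real. \<forall>i<m. \<forall>j<m.
        (\<Sum>l<m. deval D x i l * deval D x j l) =
        (if i = j then (\<Sum>t<length c. real (c ! t) * (x t)\<^sup>2) else 0))"

definition is_AOD :: "nat \<Rightarrow> nat list \<Rightarrow> nat list \<Rightarrow> design \<Rightarrow> design \<Rightarrow> bool" where
  "is_AOD m c d X Y \<longleftrightarrow>
     is_OD m c X \<and> is_OD m d Y \<and>
     (\<forall>x y :: nat \<Rightarrow> real. \<forall>i<m. \<forall>j<m.
        (\<Sum>l<m. deval X x i l * deval Y y j l) =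
        (\<Sum>l<m. deval Y y i l * deval X x j l))"

definition is_full_AOD :: "nat \<Rightarrow> nat list \<Rightarrow> nat list \<Rightarrow> design \<Rightarrow> design \<Rightarrow> bool" where
  "is_full_AOD m c d X Y \<longleftrightarrow>
     is_AOD m c d X Y \<and> (\<forall>i<m. \<forall>j<m. fst (X i j) \<noteq> 0 \<and> fst (Y i j) \<noteq> 0)"

end

theory Submission
  imports Defs
begin

text \<open>Let \<open>W\<close> be the symmetric conference matrix of order 18 (zero diagonal, \<open>\<plusminus>1\<close> elsewhere,
  \<open>W = W\<^sup>T\<close>, \<open>W W\<^sup>T = 17 I\<close>). Plugging \<open>4 \<times> 4\<close> matrices \<open>U, V\<close> into it gives
  \<open>I \<otimes> U + W \<otimes> V\<close>, and
  \<open>(I \<otimes> U + W \<otimes> V)(I \<otimes> U' + W \<otimes> V')\<^sup>T = I \<otimes> (U U'\<^sup>T + 17 V V'\<^sup>T) + W \<otimes> (U V'\<^sup>T + V U'\<^sup>T)\<close>,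
  so every identity required of an amicable design of order 72 becomes a \<open>4 \<times> 4\<close> identity.
  With \<open>J\<close> skew and orthogonal, \<open>S\<close> skew with \<open>S S\<^sup>T = 3 I\<close> and \<open>H\<close> a Hadamard matrix, take
  \<open>X = x\<^sub>1 (I \<otimes> I + W \<otimes> J) + x\<^sub>2 (I \<otimes> S + W \<otimes> J S)\<close> and \<open>Y = y (I \<otimes> H + W \<otimes> J H)\<close>:
  the weights are \<open>1 + 17 = 18\<close>, \<open>3 + 3 \<cdot> 17 = 54\<close> and \<open>4 + 4 \<cdot> 17 = 72\<close>.
  Both designs are full because \<open>I, S\<close> and \<open>J, J S\<close> have complementary supports.\<close>

definition mult_transpose ::
  "nat \<Rightarrow> (nat \<Rightarrow> nat \<Rightarrow> 'a::comm_semiring_1) \<Rightarrow> (nat \<Rightarrow> nat \<Rightarrow> 'a) \<Rightarrow> nat \<Rightarrow> nat \<Rightarrow> 'a"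
  where "mult_transpose m A B i j = (\<Sum>l<m. A i l * B j l)"

definition kron :: "nat \<Rightarrow> (nat \<Rightarrow> nat \<Rightarrow> 'a::times) \<Rightarrow> (nat \<Rightarrow> nat \<Rightarrow> 'a) \<Rightarrow> nat \<Rightarrow> nat \<Rightarrow> 'a"
  where "kron k A U i j = A (i div k) (j div k) * U (i mod k) (j mod k)"

lemma sum_lessThan_mult_eq_double_sum:
  fixes f :: "nat \<Rightarrow> 'a::comm_monoid_add"
  shows "(\<Sum>l<n * k. f l) = (\<Sum>r<n. \<Sum>a<k. f (k * r + a))"
proof -
  have "sum f {r * k..<r * k + k} = (\<Sum>a<k. f (k * r + a))" for r
    using sum.shift_bounds_nat_ivl[of f 0 "r * k" k]
    by (simp add: lessThan_atLeast0 add.commute mult.commute)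
  then show ?thesis
    using sum.nat_group[of f k n] by simp
qed

lemma mult_transpose_kron:
  fixes A B U V :: "nat \<Rightarrow> nat \<Rightarrow> 'a::comm_semiring_1"
  shows "mult_transpose (n * k) (kron k A U) (kron k B V) i j =
    mult_transpose n A B (i div k) (j div k) * mult_transpose k U V (i mod k) (j mod k)"
proof -
  have "(k * r + a) div k = r" "(k * r + a) mod k = a" if "a < k" for r a
    using that by auto
  then show ?thesis
    unfolding mult_transpose_def kron_def sum_lessThan_mult_eq_double_sum sum_product
    by (intro sum.cong refl) (simp add: mult_ac)
qed

lemma mult_transpose_add_left:
  "mult_transpose m (\<lambda>i j. A i j + A' i j) B i j = mult_transpose m A B i j + mult_transpose m A' B i j"
  by (simp add: mult_transpose_def distrib_right sum.distrib)

lemma mult_transpose_add_right: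
  "mult_transpose m A (\<lambda>i j. B i j + B' i j) i j = mult_transpose m A B i j + mult_transpose m A B' i j"
  by (simp add: mult_transpose_def distrib_left sum.distrib)

lemma mult_transpose_identity_left:
  "i < m \<Longrightarrow> mult_transpose m (\<lambda>i j. of_bool (i = j)) B i j = B j i"
  by (simp add: mult_transpose_def)

lemma mult_transpose_identity_right:
  "j < m \<Longrightarrow> mult_transpose m A (\<lambda>i j. of_bool (i = j)) i j = A i j"
  by (simp add: mult_transpose_def)

lemma sum_products_of_combinations:
  fixes x y :: "nat \<Rightarrow> real"
  shows "(\<Sum>l<m. (\<Sum>s<k. of_int (A s i l) * x s) * (\<Sum>t<k'. of_int (B t j l) * y t)) =
    (\<Sum>s<k. \<Sum>t<k'. x s * y t * of_int (mult_transpose m (A s) (B t) i j))"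
proof -
  have "(\<Sum>l<m. (\<Sum>s<k. of_int (A s i l) * x s) * (\<Sum>t<k'. of_int (B t j l) * y t)) =
      (\<Sum>l<m. \<Sum>s<k. \<Sum>t<k'. x s * y t * of_int (A s i l * B t j l))"
    by (simp add: sum_product mult_ac)
  also have "\<dots> = (\<Sum>s<k. \<Sum>t<k'. \<Sum>l<m. x s * y t * of_int (A s i l * B t j l))"
    by (simp only: sum.swap[of _ "{..<m}"] sum.swap[of _ "{..<m}" "{..<k'}"])
  finally show ?thesis
    by (simp add: mult_transpose_def sum_distrib_left)
qed

lemma is_OD_of_coefficient_matrices:
  fixes A :: "nat \<Rightarrow> nat \<Rightarrow> nat \<Rightarrow> int"
  assumes entries: "\<forall>i<m. \<forall>j<m. entry_ok (length c) (D i j)"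
    and coeffs: "\<And>x i j. i < m \<Longrightarrow> j < m \<Longrightarrow> deval D x i j = (\<Sum>t<length c. of_int (A t i j) * x t)"
    and anticomm: "\<And>s t i j. s < length c \<Longrightarrow> t < length c \<Longrightarrow> i < m \<Longrightarrow> j < m \<Longrightarrow>
      mult_transpose m (A s) (A t) i j + mult_transpose m (A t) (A s) i j =
      (if s = t \<and> i = j then 2 * int (c ! s) else 0)"
  shows "is_OD m c D"
  unfolding is_OD_def
proof (intro conjI entries allI impI)
  fix x :: "nat \<Rightarrow> real" and i j
  assume ij: "i < m" "j < m"
  let ?k = "length c"
  define G :: "nat \<Rightarrow> nat \<Rightarrow> real" where "G s t = of_int (mult_transpose m (A s) (A t) i j)" for s t
  have "(\<Sum>l<m. deval D x i l * deval D x j l) = (\<Sum>s<?k. \<Sum>t<?k. x s * x t * G s t)"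
    using ij by (simp add: coeffs sum_products_of_combinations G_def)
  also have "\<dots> = (\<Sum>s<?k. \<Sum>t<?k. x s * x t * (G s t + G t s)) / 2"
  proof -
    have "(\<Sum>s<?k. \<Sum>t<?k. x s * x t * G t s) = (\<Sum>s<?k. \<Sum>t<?k. x s * x t * G s t)"
      by (subst sum.swap) (simp add: mult_ac)
    then show ?thesis
      by (simp add: distrib_left sum.distrib)
  qed
  also have "\<dots> = (if i = j then (\<Sum>t<?k. real (c ! t) * (x t)\<^sup>2) else 0)"
  proof -
    have "G s t + G t s = (if s = t \<and> i = j then 2 * real (c ! s) else 0)" if "s < ?k" "t < ?k" for s t
      using anticomm[OF that ij] unfolding G_def by (simp flip: of_int_add)
    then have "(\<Sum>s<?k. \<Sum>t<?k. x s * x t * (G s t + G t s)) =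
        (\<Sum>s<?k. \<Sum>t<?k. if s = t \<and> i = j then 2 * (real (c ! s) * (x s)\<^sup>2) else 0)"
      by (intro sum.cong) (auto simp: power2_eq_square)
    then show ?thesis
      by (cases "i = j") (simp_all add: sum_distrib_left mult.commute)
  qed
  finally show "(\<Sum>l<m. deval D x i l * deval D x j l) = (if i = j then (\<Sum>t<?k. real (c ! t) * (x t)\<^sup>2) else 0)" .
qed

lemma is_AOD_of_coefficient_matrices:
  fixes A B :: "nat \<Rightarrow> nat \<Rightarrow> nat \<Rightarrow> int"
  assumes "is_OD m c X" "is_OD m d Y"
    and X_coeffs: "\<And>x i j. i < m \<Longrightarrow> j < m \<Longrightarrow> deval X x i j = (\<Sum>s<length c. of_int (A s i j) * x s)"
    and Y_coeffs: "\<And>y i j. i < m \<Longrightarrow> j < m \<Longrightarrow> deval Y y i j = (\<Sum>t<length d. of_int (B t i j) * y t)"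
    and amicable: "\<And>s t i j. s < length c \<Longrightarrow> t < length d \<Longrightarrow> i < m \<Longrightarrow> j < m \<Longrightarrow>
      mult_transpose m (A s) (B t) i j = mult_transpose m (B t) (A s) i j"
  shows "is_AOD m c d X Y"
  unfolding is_AOD_def
proof (intro conjI assms allI impI)
  fix x y :: "nat \<Rightarrow> real" and i j
  assume ij: "i < m" "j < m"
  have "(\<Sum>l<m. deval X x i l * deval Y y j l) =
      (\<Sum>s<length c. \<Sum>t<length d. x s * y t * of_int (mult_transpose m (A s) (B t) i j))"
    using ij by (simp add: X_coeffs Y_coeffs sum_products_of_combinations)
  also have "\<dots> = (\<Sum>t<length d. \<Sum>s<length c. y t * x s * of_int (mult_transpose m (B t) (A s) i j))"
    using ij by (subst sum.swap) (simp add: amicable mult.commute)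
  also have "\<dots> = (\<Sum>l<m. deval Y y i l * deval X x j l)"
    using ij by (simp add: X_coeffs Y_coeffs sum_products_of_combinations)
  finally show "(\<Sum>l<m. deval X x i l * deval Y y j l) = (\<Sum>l<m. deval Y y i l * deval X x j l)" .
qed

definition symmetric_conference_matrix :: "nat \<Rightarrow> (nat \<Rightarrow> nat \<Rightarrow> int) \<Rightarrow> bool"
  where "symmetric_conference_matrix n W \<longleftrightarrow>
    (\<forall>s<n. W s s = 0) \<and> (\<forall>s<n. \<forall>t<n. s \<noteq> t \<longrightarrow> W s t \<in> {-1, 1}) \<and>
    (\<forall>s<n. \<forall>t<n. W s t = W t s) \<and>
    (\<forall>s<n. \<forall>t<n. mult_transpose n W W s t = (int n - 1) * of_bool (s = t))"

definition conference_plug ::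
  "nat \<Rightarrow> (nat \<Rightarrow> nat \<Rightarrow> 'a::comm_ring_1) \<Rightarrow> (nat \<Rightarrow> nat \<Rightarrow> 'a) \<Rightarrow> (nat \<Rightarrow> nat \<Rightarrow> 'a) \<Rightarrow> nat \<Rightarrow> nat \<Rightarrow> 'a"
  where "conference_plug k W U V i j = kron k (\<lambda>s t. of_bool (s = t)) U i j + kron k W V i j"

definition plug_gram :: "nat \<Rightarrow> int \<Rightarrow> (nat \<Rightarrow> nat \<Rightarrow> int) \<Rightarrow> (nat \<Rightarrow> nat \<Rightarrow> int) \<Rightarrow>
    (nat \<Rightarrow> nat \<Rightarrow> int) \<Rightarrow> (nat \<Rightarrow> nat \<Rightarrow> int) \<Rightarrow> nat \<Rightarrow> nat \<Rightarrow> int"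
  where "plug_gram k q U V U' V' b c = mult_transpose k U U' b c + q * mult_transpose k V V' b c"

definition plug_cross :: "nat \<Rightarrow> (nat \<Rightarrow> nat \<Rightarrow> int) \<Rightarrow> (nat \<Rightarrow> nat \<Rightarrow> int) \<Rightarrow>
    (nat \<Rightarrow> nat \<Rightarrow> int) \<Rightarrow> (nat \<Rightarrow> nat \<Rightarrow> int) \<Rightarrow> nat \<Rightarrow> nat \<Rightarrow> int"
  where "plug_cross k U V U' V' b c = mult_transpose k U V' b c + mult_transpose k V U' b c"

lemma index_bounds_of_less_mult:
  fixes i n k :: nat
  assumes "i < n * k"
  shows "i div k < n" "i mod k < k"
proof -
  from assms have "0 < k"
    by (cases "k = 0") auto
  with assms show "i div k < n" "i mod k < k"
    by (simp_all add: less_mult_imp_div_less)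
qed

lemma of_bool_div_mod_eq:
  fixes i j k :: nat
  shows "of_bool (i div k = j div k) * of_bool (i mod k = j mod k) = (of_bool (i = j) :: 'a::comm_semiring_1)"
proof -
  have "i div k = j div k \<Longrightarrow> i mod k = j mod k \<Longrightarrow> i = j"
    by (metis div_mult_mod_eq)
  then show ?thesis
    by auto
qed

lemma mult_transpose_conference_plug:
  assumes W: "symmetric_conference_matrix n W" and ij: "i < n * k" "j < n * k"
  shows "mult_transpose (n * k) (conference_plug k W U V) (conference_plug k W U' V') i j =
    of_bool (i div k = j div k) * plug_gram k (int n - 1) U V U' V' (i mod k) (j mod k)
    + W (i div k) (j div k) * plug_cross k U V U' V' (i mod k) (j mod k)"
proof -
  have st: "i div k < n" "j div k < n"
    using index_bounds_of_less_mult ij by blast+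
  with W have sym: "W (j div k) (i div k) = W (i div k) (j div k)"
    and orth: "mult_transpose n W W (i div k) (j div k) = (int n - 1) * of_bool (i div k = j div k)"
    unfolding symmetric_conference_matrix_def by auto
  show ?thesis
    unfolding conference_plug_def mult_transpose_add_left mult_transpose_add_right mult_transpose_kron
      plug_gram_def plug_cross_def
    using st by (simp add: mult_transpose_identity_left mult_transpose_identity_right sym orth algebra_simps)
qed

lemma conference_plug_anticommute:
  assumes W: "symmetric_conference_matrix n W" and ij: "i < n * k" "j < n * k"
    and gram: "\<forall>b<k. \<forall>c<k. plug_gram k (int n - 1) U V U' V' b c + plug_gram k (int n - 1) U' V' U V b c
      = e * of_bool (b = c)"
    and cross: "\<forall>b<k. \<forall>c<k. plug_cross k U V U' V' b c + plug_cross k U' V' U V b c = 0"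
  shows "mult_transpose (n * k) (conference_plug k W U V) (conference_plug k W U' V') i j
    + mult_transpose (n * k) (conference_plug k W U' V') (conference_plug k W U V) i j = e * of_bool (i = j)"
proof -
  have bc: "i mod k < k" "j mod k < k"
    using index_bounds_of_less_mult ij by blast+
  have "mult_transpose (n * k) (conference_plug k W U V) (conference_plug k W U' V') i j
      + mult_transpose (n * k) (conference_plug k W U' V') (conference_plug k W U V) i j
    = of_bool (i div k = j div k) * (plug_gram k (int n - 1) U V U' V' (i mod k) (j mod k)
        + plug_gram k (int n - 1) U' V' U V (i mod k) (j mod k))
      + W (i div k) (j div k) * (plug_cross k U V U' V' (i mod k) (j mod k)
        + plug_cross k U' V' U V (i mod k) (j mod k))"
    unfolding mult_transpose_conference_plug[OF W ij] by (simp add: algebra_simps)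
  also have "\<dots> = e * (of_bool (i div k = j div k) * of_bool (i mod k = j mod k))"
    using gram[rule_format, OF bc] cross[rule_format, OF bc] by simp
  finally show ?thesis
    by (simp only: of_bool_div_mod_eq)
qed

lemma conference_plug_commute:
  assumes W: "symmetric_conference_matrix n W" and ij: "i < n * k" "j < n * k"
    and gram: "\<forall>b<k. \<forall>c<k. plug_gram k (int n - 1) U V U' V' b c = plug_gram k (int n - 1) U' V' U V b c"
    and cross: "\<forall>b<k. \<forall>c<k. plug_cross k U V U' V' b c = plug_cross k U' V' U V b c"
  shows "mult_transpose (n * k) (conference_plug k W U V) (conference_plug k W U' V') i j
    = mult_transpose (n * k) (conference_plug k W U' V') (conference_plug k W U V) i j"
proof -
  have bc: "i mod k < k" "j mod k < k"
    using index_bounds_of_less_mult ij by blast+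
  show ?thesis
    unfolding mult_transpose_conference_plug[OF W ij]
    using gram[rule_format, OF bc] cross[rule_format, OF bc] by simp
qed

lemma conference_plug_cases:
  assumes W: "symmetric_conference_matrix n W" and ij: "i < n * k" "j < n * k"
  obtains "i mod k < k" "j mod k < k" and
    "\<And>U V. conference_plug k W U V i j = U (i mod k) (j mod k)"
  | w where "i mod k < k" "j mod k < k" "w \<in> {-1, 1}" and
    "\<And>U V. conference_plug k W U V i j = w * V (i mod k) (j mod k)"
proof -
  have st: "i div k < n" "j div k < n" and bc: "i mod k < k" "j mod k < k"
    using index_bounds_of_less_mult ij by blast+
  have diag: "W (i div k) (i div k) = 0"
    using W st unfolding symmetric_conference_matrix_def by blast
  show thesis
  proof (cases "i div k = j div k")
    case True
    then show thesis
      using that(1) bc diag by (simp add: conference_plug_def kron_def)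
  next
    case False
    then have "W (i div k) (j div k) \<in> {-1, 1}"
      using W st unfolding symmetric_conference_matrix_def by blast
    then show thesis
      using that(2)[of "W (i div k) (j div k)"] False bc by (simp add: conference_plug_def kron_def)
  qed
qed

definition complementary :: "nat \<Rightarrow> (nat \<Rightarrow> nat \<Rightarrow> int) \<Rightarrow> (nat \<Rightarrow> nat \<Rightarrow> int) \<Rightarrow> bool"
  where "complementary m P Q \<longleftrightarrow>
    (\<forall>i<m. \<forall>j<m. P i j \<in> {-1, 0, 1} \<and> Q i j \<in> {-1, 0, 1} \<and> (P i j = 0 \<longleftrightarrow> Q i j \<noteq> 0))"

definition sign_matrix :: "nat \<Rightarrow> (nat \<Rightarrow> nat \<Rightarrow> int) \<Rightarrow> bool"
  where "sign_matrix m R \<longleftrightarrow> (\<forall>i<m. \<forall>j<m. R i j \<in> {-1, 1})"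

lemma complementary_conference_plug:
  assumes W: "symmetric_conference_matrix n W"
    and U: "complementary k U U'" and V: "complementary k V V'"
  shows "complementary (n * k) (conference_plug k W U V) (conference_plug k W U' V')"
  unfolding complementary_def
proof (intro allI impI)
  fix i j assume ij: "i < n * k" "j < n * k"
  from W ij show "conference_plug k W U V i j \<in> {-1, 0, 1} \<and> conference_plug k W U' V' i j \<in> {-1, 0, 1}
      \<and> (conference_plug k W U V i j = 0 \<longleftrightarrow> conference_plug k W U' V' i j \<noteq> 0)"
  proof (cases rule: conference_plug_cases)
    case 1
    then show ?thesis
      using U[unfolded complementary_def, rule_format, OF 1(1,2)] by auto
  next
    case (2 w)
    then show ?thesis
      using V[unfolded complementary_def, rule_format, OF 2(1,2)] by auto
  qed
qed

lemma sign_matrix_conference_plug: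
  assumes W: "symmetric_conference_matrix n W"
    and U: "sign_matrix k U" and V: "sign_matrix k V"
  shows "sign_matrix (n * k) (conference_plug k W U V)"
  unfolding sign_matrix_def
proof (intro allI impI)
  fix i j assume ij: "i < n * k" "j < n * k"
  from W ij show "conference_plug k W U V i j \<in> {-1, 1}"
  proof (cases rule: conference_plug_cases)
    case 1
    then show ?thesis
      using U[unfolded sign_matrix_def, rule_format, OF 1(1,2)] by simp
  next
    case (2 w)
    then show ?thesis
      using V[unfolded sign_matrix_def, rule_format, OF 2(1,2)] by auto
  qed
qed

definition design_of_pair :: "(nat \<Rightarrow> nat \<Rightarrow> int) \<Rightarrow> (nat \<Rightarrow> nat \<Rightarrow> int) \<Rightarrow> design"
  where "design_of_pair P Q i j = (if P i j \<noteq> 0 then (P i j, 0) else (Q i j, 1))"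

definition design_of :: "(nat \<Rightarrow> nat \<Rightarrow> int) \<Rightarrow> design"
  where "design_of R i j = (R i j, 0)"

lemma
  assumes "complementary m P Q" "i < m" "j < m"
  shows entry_ok_design_of_pair: "entry_ok 2 (design_of_pair P Q i j)"
    and design_of_pair_nonzero: "fst (design_of_pair P Q i j) \<noteq> 0"
    and deval_design_of_pair: "deval (design_of_pair P Q) x i j = (\<Sum>t<2. of_int (([P, Q] ! t) i j) * x t)"
  using assms(1)[unfolded complementary_def, rule_format, OF assms(2,3)]
  by (auto simp: design_of_pair_def entry_ok_def deval_def numeral_2_eq_2)

lemma
  assumes "sign_matrix m R" "i < m" "j < m"
  shows entry_ok_design_of: "entry_ok 1 (design_of R i j)"
    and design_of_nonzero: "fst (design_of R i j) \<noteq> 0"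
    and deval_design_of: "deval (design_of R) y i j = (\<Sum>t<1. of_int (([R] ! t) i j) * y t)"
  using assms(1)[unfolded sign_matrix_def, rule_format, OF assms(2,3)]
  by (auto simp: design_of_def entry_ok_def deval_def)

lemma all_lessThan_conv_upt: "(\<forall>s<n. P s) \<longleftrightarrow> (\<forall>s\<in>set [0..<n]. P s)"
  by auto

lemma sum_lessThan_conv_upt: "(\<Sum>s<n. f s) = sum_list (map f [0..<n])"
  by (simp only: atLeast_upt sum_set_upt_conv_sum_list_nat)

text \<open>The Jacobsthal matrix of \<open>GF(17)\<close> bordered by ones: index 0 is the border, index \<open>r \<ge> 1\<close>
  stands for \<open>r - 1 \<in> GF(17)\<close>, and \<open>{1, 2, 4, 8, 9, 13, 15, 16}\<close> are the nonzero squares.\<close>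

definition paley18 :: "nat \<Rightarrow> nat \<Rightarrow> int"
  where "paley18 s t = (if s = t then 0 else if s = 0 \<or> t = 0 then 1
    else if (t + 17 - s) mod 17 \<in> {1, 2, 4, 8, 9, 13, 15, 16} then 1 else -1)"

lemma paley18_conference: "symmetric_conference_matrix 18 paley18"
  unfolding symmetric_conference_matrix_def mult_transpose_def all_lessThan_conv_upt sum_lessThan_conv_upt
  by (simp add: paley18_def upt_rec)

definition matrix_of_rows :: "int list list \<Rightarrow> nat \<Rightarrow> nat \<Rightarrow> int"
  where "matrix_of_rows rows i j = rows ! i ! j"

definition I4 :: "nat \<Rightarrow> nat \<Rightarrow> int"
  where "I4 = matrix_of_rows [[1, 0, 0, 0], [0, 1, 0, 0], [0, 0, 1, 0], [0, 0, 0, 1]]"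

definition J4 :: "nat \<Rightarrow> nat \<Rightarrow> int"
  where "J4 = matrix_of_rows [[0, 1, 0, 0], [-1, 0, 0, 0], [0, 0, 0, 1], [0, 0, -1, 0]]"

definition S4 :: "nat \<Rightarrow> nat \<Rightarrow> int"
  where "S4 = matrix_of_rows [[0, 1, 1, 1], [-1, 0, 1, -1], [-1, -1, 0, 1], [-1, 1, -1, 0]]"

text \<open>\<open>JS4 = J4 * S4\<close> and \<open>JH4 = J4 * H4\<close>.\<close>

definition JS4 :: "nat \<Rightarrow> nat \<Rightarrow> int"
  where "JS4 = matrix_of_rows [[-1, 0, 1, -1], [0, -1, -1, -1], [-1, 1, -1, 0], [1, 1, 0, -1]]"

definition H4 :: "nat \<Rightarrow> nat \<Rightarrow> int"
  where "H4 = matrix_of_rows [[1, 1, 1, 1], [1, 1, -1, -1], [1, -1, -1, 1], [1, -1, 1, -1]]"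

definition JH4 :: "nat \<Rightarrow> nat \<Rightarrow> int"
  where "JH4 = matrix_of_rows [[1, 1, -1, -1], [-1, -1, -1, -1], [1, -1, 1, -1], [-1, 1, 1, -1]]"

lemmas matrices4_defs = I4_def J4_def S4_def JS4_def H4_def JH4_def matrix_of_rows_def

lemma plug_data_4_x_anticommute:
  "\<forall>b<4. \<forall>c<4. plug_gram 4 17 I4 J4 I4 J4 b c + plug_gram 4 17 I4 J4 I4 J4 b c = 36 * of_bool (b = c)"
  "\<forall>b<4. \<forall>c<4. plug_cross 4 I4 J4 I4 J4 b c + plug_cross 4 I4 J4 I4 J4 b c = 0"
  "\<forall>b<4. \<forall>c<4. plug_gram 4 17 S4 JS4 S4 JS4 b c + plug_gram 4 17 S4 JS4 S4 JS4 b c = 108 * of_bool (b = c)"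
  "\<forall>b<4. \<forall>c<4. plug_cross 4 S4 JS4 S4 JS4 b c + plug_cross 4 S4 JS4 S4 JS4 b c = 0"
  "\<forall>b<4. \<forall>c<4. plug_gram 4 17 I4 J4 S4 JS4 b c + plug_gram 4 17 S4 JS4 I4 J4 b c = 0"
  "\<forall>b<4. \<forall>c<4. plug_cross 4 I4 J4 S4 JS4 b c + plug_cross 4 S4 JS4 I4 J4 b c = 0"
  unfolding plug_gram_def plug_cross_def mult_transpose_def all_lessThan_conv_upt sum_lessThan_conv_upt
  by (simp_all add: matrices4_defs upt_rec)

lemma plug_data_4_y_anticommute:
  "\<forall>b<4. \<forall>c<4. plug_gram 4 17 H4 JH4 H4 JH4 b c + plug_gram 4 17 H4 JH4 H4 JH4 b c = 144 * of_bool (b = c)"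
  "\<forall>b<4. \<forall>c<4. plug_cross 4 H4 JH4 H4 JH4 b c + plug_cross 4 H4 JH4 H4 JH4 b c = 0"
  unfolding plug_gram_def plug_cross_def mult_transpose_def all_lessThan_conv_upt sum_lessThan_conv_upt
  by (simp_all add: matrices4_defs upt_rec)

lemma plug_data_4_commute:
  "\<forall>b<4. \<forall>c<4. plug_gram 4 17 I4 J4 H4 JH4 b c = plug_gram 4 17 H4 JH4 I4 J4 b c"
  "\<forall>b<4. \<forall>c<4. plug_cross 4 I4 J4 H4 JH4 b c = plug_cross 4 H4 JH4 I4 J4 b c"
  "\<forall>b<4. \<forall>c<4. plug_gram 4 17 S4 JS4 H4 JH4 b c = plug_gram 4 17 H4 JH4 S4 JS4 b c"
  "\<forall>b<4. \<forall>c<4. plug_cross 4 S4 JS4 H4 JH4 b c = plug_cross 4 H4 JH4 S4 JS4 b c"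
  unfolding plug_gram_def plug_cross_def mult_transpose_def all_lessThan_conv_upt sum_lessThan_conv_upt
  by (simp_all add: matrices4_defs upt_rec)

lemma plug_data_4_entries:
  "complementary 4 I4 S4" "complementary 4 J4 JS4" "sign_matrix 4 H4" "sign_matrix 4 JH4"
  unfolding complementary_def sign_matrix_def all_lessThan_conv_upt
  by (simp_all add: matrices4_defs upt_rec)

lemma paley18_plug_anticommute:
  assumes "i < 72" "j < 72"
    and "\<forall>b<4. \<forall>c<4. plug_gram 4 17 U V U' V' b c + plug_gram 4 17 U' V' U V b c = e * of_bool (b = c)"
    and "\<forall>b<4. \<forall>c<4. plug_cross 4 U V U' V' b c + plug_cross 4 U' V' U V b c = 0"
  shows "mult_transpose 72 (conference_plug 4 paley18 U V) (conference_plug 4 paley18 U' V') i j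
    + mult_transpose 72 (conference_plug 4 paley18 U' V') (conference_plug 4 paley18 U V) i j = e * of_bool (i = j)"
  using conference_plug_anticommute[OF paley18_conference, of i 4 j U V U' V' e] assms by simp

lemma paley18_plug_commute:
  assumes "i < 72" "j < 72"
    and "\<forall>b<4. \<forall>c<4. plug_gram 4 17 U V U' V' b c = plug_gram 4 17 U' V' U V b c"
    and "\<forall>b<4. \<forall>c<4. plug_cross 4 U V U' V' b c = plug_cross 4 U' V' U V b c"
  shows "mult_transpose 72 (conference_plug 4 paley18 U V) (conference_plug 4 paley18 U' V') i j
    = mult_transpose 72 (conference_plug 4 paley18 U' V') (conference_plug 4 paley18 U V) i j"
  using conference_plug_commute[OF paley18_conference, of i 4 j U V U' V'] assms by simp

abbreviation P72 :: "nat \<Rightarrow> nat \<Rightarrow> int" where "P72 \<equiv> conference_plug 4 paley18 I4 J4"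
abbreviation Q72 :: "nat \<Rightarrow> nat \<Rightarrow> int" where "Q72 \<equiv> conference_plug 4 paley18 S4 JS4"
abbreviation R72 :: "nat \<Rightarrow> nat \<Rightarrow> int" where "R72 \<equiv> conference_plug 4 paley18 H4 JH4"

definition X72 :: design
  where "X72 = design_of_pair P72 Q72"

definition Y72 :: design
  where "Y72 = design_of R72"

lemma X72_entries: "complementary 72 P72 Q72"
  using complementary_conference_plug[OF paley18_conference plug_data_4_entries(1,2)] by simp

lemma Y72_entries: "sign_matrix 72 R72"
  using sign_matrix_conference_plug[OF paley18_conference plug_data_4_entries(3,4)] by simp

lemma X72_coefficients:
  assumes "i < 72" "j < 72"
  shows "deval X72 x i j = (\<Sum>t<length [18, 54::nat]. of_int (([P72, Q72] ! t) i j) * x t)"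
  using deval_design_of_pair[OF X72_entries assms] by (simp add: X72_def numeral_2_eq_2)

lemma Y72_coefficients:
  assumes "i < 72" "j < 72"
  shows "deval Y72 y i j = (\<Sum>t<length [72::nat]. of_int (([R72] ! t) i j) * y t)"
  using deval_design_of[OF Y72_entries assms] by (simp add: Y72_def)

lemma X72_is_OD: "is_OD 72 [18, 54] X72"
proof (rule is_OD_of_coefficient_matrices)
  show "\<forall>i<72. \<forall>j<72. entry_ok (length [18, 54::nat]) (X72 i j)"
    using entry_ok_design_of_pair[OF X72_entries] by (simp add: X72_def numeral_2_eq_2)
  show "deval X72 x i j = (\<Sum>t<length [18, 54::nat]. of_int (([P72, Q72] ! t) i j) * x t)" if "i < 72" "j < 72" for x i j
    using X72_coefficients that .
  fix s t i j :: nat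
  assume st: "s < length [18, 54::nat]" "t < length [18, 54::nat]" and ij: "i < 72" "j < 72"
  show "mult_transpose 72 ([P72, Q72] ! s) ([P72, Q72] ! t) i j + mult_transpose 72 ([P72, Q72] ! t) ([P72, Q72] ! s) i j =
      (if s = t \<and> i = j then 2 * int ([18, 54] ! s) else 0)"
    using st paley18_plug_anticommute[OF ij plug_data_4_x_anticommute(1,2)]
      paley18_plug_anticommute[OF ij plug_data_4_x_anticommute(3,4)]
      paley18_plug_anticommute[OF ij, of I4 J4 S4 JS4 0] plug_data_4_x_anticommute(5,6)
    by (auto simp: less_Suc_eq add.commute)
qed

lemma Y72_is_OD: "is_OD 72 [72] Y72"
proof (rule is_OD_of_coefficient_matrices)
  show "\<forall>i<72. \<forall>j<72. entry_ok (length [72::nat]) (Y72 i j)"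
    using entry_ok_design_of[OF Y72_entries] by (simp add: Y72_def)
  show "deval Y72 y i j = (\<Sum>t<length [72::nat]. of_int (([R72] ! t) i j) * y t)" if "i < 72" "j < 72" for y i j
    using Y72_coefficients that .
  fix s t i j :: nat
  assume "s < length [72::nat]" "t < length [72::nat]" and ij: "i < 72" "j < 72"
  then show "mult_transpose 72 ([R72] ! s) ([R72] ! t) i j + mult_transpose 72 ([R72] ! t) ([R72] ! s) i j =
      (if s = t \<and> i = j then 2 * int ([72] ! s) else 0)"
    using paley18_plug_anticommute[OF ij plug_data_4_y_anticommute] by simp
qed

lemma X72_Y72_amicable: "is_AOD 72 [18, 54] [72] X72 Y72"
proof (rule is_AOD_of_coefficient_matrices[OF X72_is_OD Y72_is_OD X72_coefficients Y72_coefficients])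
  fix s t i j :: nat
  assume "s < length [18, 54::nat]" "t < length [72::nat]" and ij: "i < 72" "j < 72"
  then show "mult_transpose 72 ([P72, Q72] ! s) ([R72] ! t) i j
      = mult_transpose 72 ([R72] ! t) ([P72, Q72] ! s) i j"
    using paley18_plug_commute[OF ij plug_data_4_commute(1,2)] paley18_plug_commute[OF ij plug_data_4_commute(3,4)]
    by (auto simp: less_Suc_eq)
qed

theorem mainTheorem4:
  shows "\<exists>X Y. is_full_AOD 72 [18, 54] [72] X Y"
proof (intro exI)
  show "is_full_AOD 72 [18, 54] [72] X72 Y72"
    unfolding is_full_AOD_def
    using X72_Y72_amicable design_of_pair_nonzero[OF X72_entries] design_of_nonzero[OF Y72_entries]
    by (simp add: X72_def Y72_def)
qed

end
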